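(* Let $Q$ be a supported quantale and $R$ an equivariantly supported quantale. Then every strong homomorphism of based quantales $f=(f_1,f_0):Q\to R$ commutes with the supports, i.e. $f_0(\varsigma_Q(x))=\varsigma_R(f_1(x))$ for all $x\in Q$.
   Context: For a locale $A$, an $A$-$A$-bimodule is a sup-lattice $M$ with actions $a\triangleright m$, $m\triangleleft a$ preserving joins in each variable, with $1_A\triangleright m=m$, $(a\wedge b)\triangleright m=a\triangleright(b\triangleright m)$, $m\triangleleft1_A=m$, $m\triangleleft(a\wedge b)=(m\triangleleft a)\triangleleft b$, $(a\triangleright m)\triangleleft b=a\triangleright(m\triangleleft b)$. An $A$-$A$-quantale is such a $Q$ with associative join-preserving multiplication and $(a\triangleright x)y=a\triangleright(xy)$, $(x\triangleleft a)y=x(a\triangleright y)$, $(xy)\triangleleft a=x(y\triangleleft a)$; involutive if there is a join-preserving $x\mapsto x^*$ with $x^{**}=x$, $(xy)^*=y^*x^*$, $(a\triangleright(x\triangleleft b))^*=b\triangleright(x^*\triangleleft a)$. A based quantale is an involutive $Q_0$-$Q_0$-quantale for a locale $Q_0$. A support is a join-preserving $\varsigma:Q\to Q_0$ with $\varsigma(1_Q)=1_{Q_0}$, $\varsigma(x)\triangleright y\le xx^*y$, $\varsigma(x)\triangleright x=x$; equivariant if $\varsigma(a\triangleright x)=a\wedge\varsigma(x)$. A supported (resp. equivariantly supported) quantale is a based quantale with a support (resp. equivariant support). A homomorphism of based quantales $f:Q\to R$ is a pair $(f_1,f_0)$ with $f_1:Q\to R$ preserving joins, multiplication and involution, $f_0:Q_0\to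 R_0$ a frame homomorphism, and $f_1(a\triangleright x)=f_0(a)\triangleright f_1(x)$, $f_1(x\triangleleft a)=f_1(x)\triangleleft f_0(a)$; it is strong if $f_1(1_Q)=1_R$. *)

theory Defs
  imports Main
begin

text \<open>Sup-lattices are modelled by types of class complete_lattice; the carrier of a
based quantale Q is the type 'q, the base locale Q0 is the type 'a.
The element 1 of a sup-lattice/locale is its top element.\<close>

definition join_pres :: "('x::complete_lattice \<Rightarrow> 'y::complete_lattice) \<Rightarrow> bool" where
  "join_pres f \<longleftrightarrow> (\<forall>S. f (Sup S) = Sup (f ` S))"

definition is_frame :: "'a::complete_lattice itself \<Rightarrow> bool" where
  "is_frame _ \<longleftrightarrow> (\<forall>(a::'a) S. inf a (Sup S) = Sup (inf a ` S))"

definition frame_hom :: "('a::complete_lattice \<Rightarrow> 'b::complete_lattice) \<Rightarrow> bool" where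
  "frame_hom f \<longleftrightarrow> join_pres f \<and> f top = top \<and> (\<forall>a b. f (inf a b) = inf (f a) (f b))"

definition bimodule ::
  "('a::complete_lattice \<Rightarrow> 'm::complete_lattice \<Rightarrow> 'm) \<Rightarrow> ('m \<Rightarrow> 'a \<Rightarrow> 'm) \<Rightarrow> bool" where
  "bimodule la ra \<longleftrightarrow>
     (\<forall>a. join_pres (la a)) \<and> (\<forall>m. join_pres (\<lambda>a. la a m)) \<and>
     (\<forall>m. join_pres (ra m)) \<and> (\<forall>a. join_pres (\<lambda>m. ra m a)) \<and>
     (\<forall>m. la top m = m) \<and> (\<forall>a b m. la (inf a b) m = la a (la b m)) \<and>
     (\<forall>m. ra m top = m) \<and> (\<forall>a b m. ra m (inf a b) = ra (ra m a) b) \<and>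
     (\<forall>a b m. ra (la a m) b = la a (ra m b))"

definition AA_quantale ::
  "('a::complete_lattice \<Rightarrow> 'q::complete_lattice \<Rightarrow> 'q) \<Rightarrow> ('q \<Rightarrow> 'a \<Rightarrow> 'q)
   \<Rightarrow> ('q \<Rightarrow> 'q \<Rightarrow> 'q) \<Rightarrow> bool" where
  "AA_quantale la ra mult \<longleftrightarrow> bimodule la ra \<and>
     (\<forall>x y z. mult (mult x y) z = mult x (mult y z)) \<and>
     (\<forall>x. join_pres (mult x)) \<and> (\<forall>y. join_pres (\<lambda>x. mult x y)) \<and>
     (\<forall>a x y. mult (la a x) y = la a (mult x y)) \<and>
     (\<forall>a x y. mult (ra x a) y = mult x (la a y)) \<and>
     (\<forall>a x y. ra (mult x y) a = mult x (ra y a))"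

definition involutive_AA_quantale ::
  "('a::complete_lattice \<Rightarrow> 'q::complete_lattice \<Rightarrow> 'q) \<Rightarrow> ('q \<Rightarrow> 'a \<Rightarrow> 'q)
   \<Rightarrow> ('q \<Rightarrow> 'q \<Rightarrow> 'q) \<Rightarrow> ('q \<Rightarrow> 'q) \<Rightarrow> bool" where
  "involutive_AA_quantale la ra mult invl \<longleftrightarrow> AA_quantale la ra mult \<and>
     join_pres invl \<and> (\<forall>x. invl (invl x) = x) \<and>
     (\<forall>x y. invl (mult x y) = mult (invl y) (invl x)) \<and>
     (\<forall>a b x. invl (la a (ra x b)) = la b (ra (invl x) a))"

definition based_quantale ::
  "('a::complete_lattice \<Rightarrow> 'q::complete_lattice \<Rightarrow> 'q) \<Rightarrow> ('q \<Rightarrow> 'a \<Rightarrow> 'q)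
   \<Rightarrow> ('q \<Rightarrow> 'q \<Rightarrow> 'q) \<Rightarrow> ('q \<Rightarrow> 'q) \<Rightarrow> bool" where
  "based_quantale la ra mult invl \<longleftrightarrow> is_frame TYPE('a) \<and> involutive_AA_quantale la ra mult invl"

definition is_support ::
  "('a::complete_lattice \<Rightarrow> 'q::complete_lattice \<Rightarrow> 'q) \<Rightarrow> ('q \<Rightarrow> 'q \<Rightarrow> 'q) \<Rightarrow> ('q \<Rightarrow> 'q)
   \<Rightarrow> ('q \<Rightarrow> 'a) \<Rightarrow> bool" where
  "is_support la mult invl supp \<longleftrightarrow> join_pres supp \<and> supp top = top \<and>
     (\<forall>x y. la (supp x) y \<le> mult (mult x (invl x)) y) \<and>
     (\<forall>x. la (supp x) x = x)"

definition equivariant_support ::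
  "('a::complete_lattice \<Rightarrow> 'q::complete_lattice \<Rightarrow> 'q) \<Rightarrow> ('q \<Rightarrow> 'q \<Rightarrow> 'q) \<Rightarrow> ('q \<Rightarrow> 'q)
   \<Rightarrow> ('q \<Rightarrow> 'a) \<Rightarrow> bool" where
  "equivariant_support la mult invl supp \<longleftrightarrow> is_support la mult invl supp \<and>
     (\<forall>a x. supp (la a x) = inf a (supp x))"

definition supported_quantale where
  "supported_quantale la ra mult invl supp \<longleftrightarrow>
     based_quantale la ra mult invl \<and> is_support la mult invl supp"

definition equivariantly_supported_quantale where
  "equivariantly_supported_quantale la ra mult invl supp \<longleftrightarrow>
     based_quantale la ra mult invl \<and> equivariant_support la mult invl supp"

definition based_quantale_hom ::
  "('a::complete_lattice \<Rightarrow> 'q::complete_lattice \<Rightarrow> 'q) \<Rightarrow> ('q \<Rightarrow> 'a \<Rightarrow> 'q)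
   \<Rightarrow> ('q \<Rightarrow> 'q \<Rightarrow> 'q) \<Rightarrow> ('q \<Rightarrow> 'q)
   \<Rightarrow> ('b::complete_lattice \<Rightarrow> 'r::complete_lattice \<Rightarrow> 'r) \<Rightarrow> ('r \<Rightarrow> 'b \<Rightarrow> 'r)
   \<Rightarrow> ('r \<Rightarrow> 'r \<Rightarrow> 'r) \<Rightarrow> ('r \<Rightarrow> 'r)
   \<Rightarrow> ('q \<Rightarrow> 'r) \<Rightarrow> ('a \<Rightarrow> 'b) \<Rightarrow> bool" where
  "based_quantale_hom laQ raQ multQ invQ laR raR multR invR f1 f0 \<longleftrightarrow>
     join_pres f1 \<and> (\<forall>x y. f1 (multQ x y) = multR (f1 x) (f1 y)) \<and>
     (\<forall>x. f1 (invQ x) = invR (f1 x)) \<and> frame_hom f0 \<and>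
     (\<forall>a x. f1 (laQ a x) = laR (f0 a) (f1 x)) \<and>
     (\<forall>a x. f1 (raQ x a) = raR (f1 x) (f0 a))"

definition strong_based_quantale_hom where
  "strong_based_quantale_hom laQ raQ multQ invQ laR raR multR invR f1 f0 \<longleftrightarrow>
     based_quantale_hom laQ raQ multQ invQ laR raR multR invR f1 f0 \<and> f1 top = top"

end

theory Submission
  imports Defs
begin

text \<open>If \<open>f\<close> is a strong homomorphism, the inequality
\<open>\<varsigma>(f\<^sub>1 x) \<le> f\<^sub>0(\<varsigma> x)\<close> comes from applying \<open>f\<^sub>1\<close> to \<open>\<varsigma> x \<triangleright> x = x\<close> and using
equivariance of \<open>\<varsigma>\<^sub>R\<close>. For the converse, equivariance and \<open>\<varsigma> 1 = 1\<close> give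
\<open>b = \<varsigma>(b \<triangleright> 1)\<close>, so \<open>f\<^sub>0(\<varsigma> x) = \<varsigma>(f\<^sub>1(\<varsigma> x \<triangleright> 1)) \<le> \<varsigma>(f\<^sub>1(x x\<^sup>* 1))\<close>, and an
equivariant support satisfies \<open>\<varsigma>(y z) \<le> \<varsigma> y\<close>, because \<open>y \<le> \<varsigma> y \<triangleright> 1\<close>.\<close>

lemma join_pres_mono:
  assumes "join_pres f"
  shows "mono f"
proof
  fix x y :: 'a assume "x \<le> y"
  have "f y = f (Sup {x, y})" using \<open>x \<le> y\<close> by (simp add: sup_absorb2)
  also have "\<dots> = Sup (f ` {x, y})" using assms unfolding join_pres_def by blast
  also have "\<dots> = sup (f x) (f y)" by simp
  finally show "f x \<le> f y" by (metis sup.cobounded1)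
qed

lemma equivariant_support_action_top:
  assumes "equivariant_support la mult invl supp"
  shows "supp (la a top) = a"
  using assms unfolding equivariant_support_def is_support_def by simp

lemma equivariant_support_mult_le:
  assumes quantale: "AA_quantale la ra mult"
    and supp: "equivariant_support la mult invl supp"
  shows "supp (mult y z) \<le> supp y"
proof -
  have la_mono: "mono (la a)" and mult_mono: "mono (\<lambda>x. mult x z)"
    and mult_la: "mult (la a x) z = la a (mult x z)" for a x
    using quantale unfolding AA_quantale_def bimodule_def by (simp_all add: join_pres_mono)
  have supp_mono: "mono supp" and supp_la_self: "la (supp y) y = y"
    using supp unfolding equivariant_support_def is_support_def by (simp_all add: join_pres_mono)
  have "y \<le> la (supp y) top" using la_mono supp_la_self by (metis monoD top_greatest)
  then have "mult y z \<le> mult (la (supp y) top) z" by (metis mult_mono monoD)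
  also have "\<dots> = la (supp y) (mult top z)" by (rule mult_la)
  also have "\<dots> \<le> la (supp y) top" using la_mono by (simp add: monoD)
  finally have "supp (mult y z) \<le> supp (la (supp y) top)" using supp_mono by (simp add: monoD)
  also have "\<dots> = supp y" using equivariant_support_action_top[OF supp] .
  finally show ?thesis .
qed

lemma based_quantale_hom_support_le:
  assumes "is_support laQ multQ invQ suppQ"
    and supp: "equivariant_support laR multR invR suppR"
    and "based_quantale_hom laQ raQ multQ invQ laR raR multR invR f1 f0"
  shows "suppR (f1 x) \<le> f0 (suppQ x)"
proof -
  have "suppR (f1 x) = suppR (f1 (laQ (suppQ x) x))"
    using assms(1) unfolding is_support_def by simp
  also have "\<dots> = inf (f0 (suppQ x)) (suppR (f1 x))"
    using assms(3) supp unfolding based_quantale_hom_def equivariant_support_def by simp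
  finally show ?thesis by (metis inf.cobounded1)
qed

lemma strong_based_quantale_hom_le_support:
  assumes suppQ: "is_support laQ multQ invQ suppQ"
    and quantaleR: "AA_quantale laR raR multR"
    and suppR: "equivariant_support laR multR invR suppR"
    and "strong_based_quantale_hom laQ raQ multQ invQ laR raR multR invR f1 f0"
  shows "f0 (suppQ x) \<le> suppR (f1 x)"
proof -
  have f1_la: "f1 (laQ a y) = laR (f0 a) (f1 y)"
    and f1_mult: "f1 (multQ y z) = multR (f1 y) (f1 z)" and "f1 top = top"
    and f1_mono: "mono f1" for a y z
    using assms(4) unfolding strong_based_quantale_hom_def based_quantale_hom_def
    by (simp_all add: join_pres_mono)
  have suppR_mono: "mono suppR"
    using suppR unfolding equivariant_support_def is_support_def by (simp add: join_pres_mono)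
  have "laQ (suppQ x) top \<le> multQ (multQ x (invQ x)) top"
    using suppQ unfolding is_support_def by simp
  then have "suppR (f1 (laQ (suppQ x) top)) \<le> suppR (f1 (multQ (multQ x (invQ x)) top))"
    using f1_mono suppR_mono by (simp add: monoD)
  moreover have "suppR (f1 (laQ (suppQ x) top)) = f0 (suppQ x)"
    using f1_la \<open>f1 top = top\<close> equivariant_support_action_top[OF suppR] by simp
  moreover have "suppR (f1 (multQ (multQ x (invQ x)) top)) \<le> suppR (f1 x)"
    using equivariant_support_mult_le[OF quantaleR suppR] f1_mult by (metis order_trans)
  ultimately show ?thesis by order
qed

theorem lemma3p25:
  fixes laQ :: "'a::complete_lattice \<Rightarrow> 'q::complete_lattice \<Rightarrow> 'q"
    and raQ :: "'q \<Rightarrow> 'a \<Rightarrow> 'q" and multQ :: "'q \<Rightarrow> 'q \<Rightarrow> 'q" and invQ :: "'q \<Rightarrow> 'q"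
    and suppQ :: "'q \<Rightarrow> 'a"
    and laR :: "'b::complete_lattice \<Rightarrow> 'r::complete_lattice \<Rightarrow> 'r"
    and raR :: "'r \<Rightarrow> 'b \<Rightarrow> 'r" and multR :: "'r \<Rightarrow> 'r \<Rightarrow> 'r" and invR :: "'r \<Rightarrow> 'r"
    and suppR :: "'r \<Rightarrow> 'b"
    and f1 :: "'q \<Rightarrow> 'r" and f0 :: "'a \<Rightarrow> 'b"
  assumes "supported_quantale laQ raQ multQ invQ suppQ"
    and "equivariantly_supported_quantale laR raR multR invR suppR"
    and "strong_based_quantale_hom laQ raQ multQ invQ laR raR multR invR f1 f0"
  shows "\<forall>x. f0 (suppQ x) = suppR (f1 x)"
proof
  fix x
  have suppQ: "is_support laQ multQ invQ suppQ"
    using assms(1) unfolding supported_quantale_def by simp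
  have suppR: "equivariant_support laR multR invR suppR"
    and quantaleR: "AA_quantale laR raR multR"
    using assms(2) unfolding equivariantly_supported_quantale_def based_quantale_def
      involutive_AA_quantale_def by simp_all
  have hom: "based_quantale_hom laQ raQ multQ invQ laR raR multR invR f1 f0"
    using assms(3) unfolding strong_based_quantale_hom_def by simp
  show "f0 (suppQ x) = suppR (f1 x)"
    using based_quantale_hom_support_le[OF suppQ suppR hom]
      strong_based_quantale_hom_le_support[OF suppQ quantaleR suppR assms(3)]
    by (rule antisym[rotated])
qed

end
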